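(* $\chi_D(LG_3)\le 5$.
   Context: Let $V=\mathbb{F}_3^3$; $LG_3$ is the bipartite graph whose vertices are the $1$-dimensional subspaces ("points") and the $2$-dimensional subspaces ("lines") of $V$, a point being adjacent to a line iff it is contained in it. A coloring is distinguishing if the only graph automorphism mapping every color class onto itself is the identity; $\chi_D(G)$ is the minimum number of colors of a proper distinguishing coloring of $G$. *)

theory Defs
  imports "HOL-Analysis.Cartesian_Space" "Berlekamp_Zassenhaus.Finite_Field"
begin

datatype three = T0 | T1 | T2

lemma UNIV_three: "(UNIV :: three set) = {T0, T1, T2}"
  using three.exhaust by blast

instance three :: finite
  by standard (simp add: UNIV_three)

lemma card_three: "CARD(three) = 3"
  by (simp add: UNIV_three)

instance three :: prime_card
  by standard (simp add: card_three)

type_synonym F3 = "three mod_ring"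

type_synonym V3 = "F3 ^ 3"

definition graph_automorphism :: "'v set \<Rightarrow> ('v \<Rightarrow> 'v \<Rightarrow> bool) \<Rightarrow> ('v \<Rightarrow> 'v) \<Rightarrow> bool" where
  "graph_automorphism Vs E \<sigma> \<longleftrightarrow>
     bij_betw \<sigma> Vs Vs \<and> (\<forall>u\<in>Vs. \<forall>v\<in>Vs. E u v \<longleftrightarrow> E (\<sigma> u) (\<sigma> v))"

definition proper_coloring :: "'v set \<Rightarrow> ('v \<Rightarrow> 'v \<Rightarrow> bool) \<Rightarrow> ('v \<Rightarrow> nat) \<Rightarrow> bool" where
  "proper_coloring Vs E c \<longleftrightarrow> (\<forall>u\<in>Vs. \<forall>v\<in>Vs. E u v \<longrightarrow> c u \<noteq> c v)"

definition distinguishing_coloring :: "'v set \<Rightarrow> ('v \<Rightarrow> 'v \<Rightarrow> bool) \<Rightarrow> ('v \<Rightarrow> nat) \<Rightarrow> bool" where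
  "distinguishing_coloring Vs E c \<longleftrightarrow>
     (\<forall>\<sigma>. graph_automorphism Vs E \<sigma> \<and> (\<forall>v\<in>Vs. c (\<sigma> v) = c v) \<longrightarrow> (\<forall>v\<in>Vs. \<sigma> v = v))"

definition distinguishing_chromatic_number :: "'v set \<Rightarrow> ('v \<Rightarrow> 'v \<Rightarrow> bool) \<Rightarrow> nat" where
  "distinguishing_chromatic_number Vs E =
     (LEAST k. \<exists>c. c ` Vs \<subseteq> {..<k} \<and> proper_coloring Vs E c \<and> distinguishing_coloring Vs E c)"

definition LG3_points :: "V3 set set" where
  "LG3_points = {W. vec.subspace W \<and> vec.dim W = 1}"

definition LG3_lines :: "V3 set set" where
  "LG3_lines = {W. vec.subspace W \<and> vec.dim W = 2}"

definition LG3_vertices :: "V3 set set" where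
  "LG3_vertices = LG3_points \<union> LG3_lines"

definition LG3_adj :: "V3 set \<Rightarrow> V3 set \<Rightarrow> bool" where
  "LG3_adj X Y \<longleftrightarrow>
     (X \<in> LG3_points \<and> Y \<in> LG3_lines \<and> X \<subseteq> Y) \<or>
     (X \<in> LG3_lines \<and> Y \<in> LG3_points \<and> Y \<subseteq> X)"

end

theory Submission
  imports Defs
begin

text \<open>Colour the frame points (1,0,0), (0,1,0), (0,0,1), (1,1,1) with 0, 1, 2, 3, every other
  point with 4, and a line with the least i \<le> 2 such that the i-th coordinate point is not
  on it. The point (1,1,0) has colour 4, which no line has, so a colour-preserving
  automorphism maps it to a point, hence maps every point on a line through it to a point;
  the frame points are among these and are the only points of their colours, so the frame
  is fixed pointwise. A collineation of PG(2,3) fixing a frame fixes everything: the sides of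
  the quadrangle meet in the three diagonal points, the diagonal lines meet the sides in the
  remaining points, and a line is fixed once two of its points are.\<close>

lemma F3_three_eq_0: "(3::F3) = 0"
proof -
  have "(of_nat CARD(three) :: F3) = 0" by (rule of_nat_card_eq_0)
  thus ?thesis by (simp add: card_three)
qed

lemma F3_numerals:
  "(4::F3) = 1" "(5::F3) = 2" "(6::F3) = 0" "(7::F3) = 1" "(8::F3) = 2" "(2::F3) * 2 = 1"
proof -
  have "(4::F3) = 3 + 1" "(5::F3) = 3 + 2" "(6::F3) = 3 + 3" "(7::F3) = 3 + 3 + 1"
    "(8::F3) = 3 + 3 + 2" "(2::F3) * 2 = 3 + 1" by simp_all
  thus "(4::F3) = 1" "(5::F3) = 2" "(6::F3) = 0" "(7::F3) = 1" "(8::F3) = 2" "(2::F3) * 2 = 1"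
    by (simp_all add: F3_three_eq_0)
qed

lemma F3_two_neq [simp]: "(2::F3) \<noteq> 0" "(2::F3) \<noteq> 1" "(0::F3) \<noteq> 2" "(1::F3) \<noteq> 2"
proof -
  have "(3::F3) = 2 + 1" "(3::F3) = 1 + 1 + 1" by simp_all
  hence "(2::F3) \<noteq> 0 \<and> (2::F3) \<noteq> 1" using F3_three_eq_0 by (metis add_0 one_neq_zero)
  thus "(2::F3) \<noteq> 0" "(2::F3) \<noteq> 1" "(0::F3) \<noteq> 2" "(1::F3) \<noteq> 2" by auto
qed

lemma UNIV_F3: "(UNIV::F3 set) = {0, 1, 2}"
proof -
  have "card {0, 1, 2::F3} = card (UNIV::F3 set)" by (simp add: card_three)
  thus ?thesis by (intro card_subset_eq[symmetric]) auto
qed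

section \<open>Incidence of one- and two-dimensional subspaces\<close>

context finite_dimensional_vector_space
begin

lemma subspace_eq_if_subset_dim_le:
  assumes "subspace S" "subspace T" "S \<subseteq> T" "dim T \<le> dim S"
  shows "T = S"
  using dim_eq_span[OF assms(3,4)] assms(1,2) by (metis span_eq_iff)

lemma projective_join_unique:
  assumes P: "subspace P" "dim P = 1" and Q: "subspace Q" "dim Q = 1" and "P \<noteq> Q"
    and L: "subspace L" "dim L = 2" and M: "subspace M" "dim M = 2"
    and "P \<subseteq> L" "Q \<subseteq> L" "P \<subseteq> M" "Q \<subseteq> M"
  shows "L = M"
proof -
  have I: "subspace (L \<inter> M)" using L M by (simp add: subspace_inter)
  have "dim (L \<inter> M) \<ge> 2"
  proof (rule ccontr)
    assume "\<not> dim (L \<inter> M) \<ge> 2"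
    hence "L \<inter> M = P" using subspace_eq_if_subset_dim_le[OF P(1) I] assms by auto
    hence "P = Q" using subspace_eq_if_subset_dim_le[OF Q(1) P(1)] P Q assms by auto
    thus False using \<open>P \<noteq> Q\<close> by simp
  qed
  hence "L = L \<inter> M" "M = L \<inter> M"
    using subspace_eq_if_subset_dim_le[OF I] L M by auto
  thus ?thesis by simp
qed

lemma projective_meet_unique:
  assumes P: "subspace P" "dim P = 1" and Q: "subspace Q" "dim Q = 1"
    and L: "subspace L" "dim L = 2" and M: "subspace M" "dim M = 2" and "L \<noteq> M"
    and "P \<subseteq> L" "Q \<subseteq> L" "P \<subseteq> M" "Q \<subseteq> M"
  shows "P = Q"
proof -
  have I: "subspace (L \<inter> M)" using L M by (simp add: subspace_inter)
  have "dim (L \<inter> M) \<le> 1"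
  proof (rule ccontr)
    assume "\<not> dim (L \<inter> M) \<le> 1"
    hence "L = L \<inter> M" "M = L \<inter> M"
      using subspace_eq_if_subset_dim_le[OF I] L M by auto
    thus False using \<open>L \<noteq> M\<close> by simp
  qed
  hence "L \<inter> M = P" "L \<inter> M = Q"
    using subspace_eq_if_subset_dim_le[OF _ I] P Q assms by auto
  thus ?thesis by simp
qed

end

section \<open>Coordinates in PG(2,3)\<close>

definition v3 :: "F3 \<Rightarrow> F3 \<Rightarrow> F3 \<Rightarrow> V3" where
  "v3 a b c = (\<chi> i. if i = 1 then a else if i = 2 then b else c)"

lemma v3_nth [simp]: "v3 a b c $ 1 = a" "v3 a b c $ 2 = b" "v3 a b c $ 3 = c"
  by (simp_all add: v3_def)

lemma v3_eq_iff [simp]: "v3 a b c = v3 a' b' c' \<longleftrightarrow> a = a' \<and> b = b' \<and> c = c'"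
  by (auto simp: vec_eq_iff forall_3)

lemma v3_components: "x = v3 (x$1) (x$2) (x$3)"
  by (simp add: vec_eq_iff forall_3)

lemma zero_eq_v3: "(0::V3) = v3 0 0 0"
  by (simp add: vec_eq_iff forall_3)

lemma v3_add [simp]: "v3 a b c + v3 a' b' c' = v3 (a + a') (b + b') (c + c')"
  by (simp add: vec_eq_iff forall_3)

lemma v3_scale [simp]: "k *s v3 a b c = v3 (k * a) (k * b) (k * c)"
  by (simp add: vec_eq_iff forall_3)

definition pt :: "V3 \<Rightarrow> V3 set" where "pt v = vec.span {v}"

definition lin :: "V3 \<Rightarrow> V3 \<Rightarrow> V3 set" where "lin u w = vec.span {u, w}"

lemma mem_pt_iff: "x \<in> pt v \<longleftrightarrow> x = 0 \<or> x = v \<or> x = 2 *s v"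
proof -
  have "x \<in> pt v \<longleftrightarrow> (\<exists>k::F3. x = k *s v)" unfolding pt_def vec.span_singleton by auto
  also have "\<dots> \<longleftrightarrow> (\<exists>k\<in>{0,1,2::F3}. x = k *s v)" using UNIV_F3 by blast
  finally show ?thesis by simp
qed

lemma mem_lin_iff:
  "x \<in> lin u w \<longleftrightarrow> (\<exists>a\<in>{0,1,2::F3}. \<exists>b\<in>{0,1,2::F3}. x = a *s u + b *s w)"
proof -
  have "x \<in> lin u w \<longleftrightarrow> (\<exists>a b::F3. x - a *s u = b *s w)"
    unfolding lin_def vec.span_breakdown_eq vec.span_singleton by auto
  also have "\<dots> \<longleftrightarrow> (\<exists>a b::F3. x = a *s u + b *s w)"
    by (metis add_diff_cancel_left' diff_add_cancel)
  finally show ?thesis using UNIV_F3 by simp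
qed

text \<open>With these rules simp decides incidences between concrete points and lines; the numerals
  up to 8 = 2 * 2 + 2 * 2 in \<open>F3_numerals\<close> are those arising in coordinates of \<open>a *s u + b *s w\<close>.\<close>
lemmas coordinate_simps = mem_lin_iff mem_pt_iff F3_three_eq_0 F3_numerals zero_eq_v3

lemma pt_mem_points: "v \<noteq> 0 \<Longrightarrow> pt v \<in> LG3_points"
proof -
  assume "v \<noteq> 0"
  hence "vec.independent {v}" by (simp add: vec.independent_insert)
  hence "vec.dim (pt v) = 1" unfolding pt_def by (simp add: vec.dim_span_eq_card_independent)
  thus ?thesis unfolding LG3_points_def pt_def by simp
qed

lemma lin_mem_lines: "w \<noteq> 0 \<Longrightarrow> u \<notin> pt w \<Longrightarrow> lin u w \<in> LG3_lines"
proof -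
  assume w: "w \<noteq> 0" and u: "u \<notin> pt w"
  have "u \<noteq> w" using u unfolding pt_def using vec.span_base by blast
  moreover have "vec.independent {u, w}"
    using w u unfolding pt_def by (simp add: vec.independent_insert)
  ultimately show ?thesis unfolding LG3_lines_def lin_def
    by (simp add: vec.dim_eq_card_independent)
qed

lemma pt_self: "v \<in> pt v"
  unfolding pt_def by (simp add: vec.span_base)

lemma pt_neq: "u \<notin> pt w \<Longrightarrow> pt u \<noteq> pt w"
  using pt_self by metis

lemma pt_subset_lin: "r \<in> lin a b \<Longrightarrow> pt r \<subseteq> lin a b"
  unfolding pt_def lin_def by (simp add: vec.span_minimal)

lemma lin_gen: "a \<in> lin a b" "b \<in> lin a b"
  unfolding lin_def by (simp_all add: vec.span_base)

lemma pt_scale: "k \<noteq> 0 \<Longrightarrow> pt (k *s v) = pt v"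
proof -
  assume k: "k \<noteq> 0"
  have "pt (k *s v) \<subseteq> pt v" unfolding pt_def
    by (simp add: vec.span_minimal vec.span_scale vec.span_base)
  moreover have "v = inverse k *s (k *s v)" using k by simp
  hence "pt v \<subseteq> pt (k *s v)" unfolding pt_def
    by (metis empty_subsetI insert_subset vec.span_base vec.span_minimal vec.span_scale
        vec.subspace_span singletonI)
  ultimately show ?thesis by blast
qed

lemma points_lines_disjoint: "X \<in> LG3_points \<Longrightarrow> X \<notin> LG3_lines"
  unfolding LG3_points_def LG3_lines_def by auto

lemma point_eq_pt: assumes "X \<in> LG3_points" obtains x where "x \<noteq> 0" "X = pt x"
proof -
  have X: "vec.subspace X" "vec.dim X = 1" using assms unfolding LG3_points_def by auto
  obtain B where B: "B \<subseteq> X" "vec.independent B" "X \<subseteq> vec.span B" "card B = vec.dim X"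
    by (rule vec.basis_exists)
  then obtain x where x: "B = {x}" using X by (auto simp: card_1_singleton_iff)
  have "vec.span B \<subseteq> X" using B X by (simp add: vec.span_minimal)
  hence "X = pt x" using B x unfolding pt_def by auto
  moreover have "x \<noteq> 0" using B x vec.dependent_zero by blast
  ultimately show ?thesis by (rule that[rotated])
qed

lemma line_contains_two_points:
  assumes "L \<in> LG3_lines"
  obtains P Q where "P \<in> LG3_points" "Q \<in> LG3_points" "P \<noteq> Q" "P \<subseteq> L" "Q \<subseteq> L"
proof -
  have L: "vec.subspace L" "vec.dim L = 2" using assms unfolding LG3_lines_def by auto
  obtain B where B: "B \<subseteq> L" "vec.independent B" "L \<subseteq> vec.span B" "card B = vec.dim L"
    by (rule vec.basis_exists)
  then obtain u w where uw: "B = {u, w}" "u \<noteq> w" using L by (auto simp: card_2_iff)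
  have "u \<noteq> 0" "w \<noteq> 0" using B uw vec.dependent_zero by blast+
  moreover have "u \<notin> pt w" using B(2) uw unfolding pt_def by (simp add: vec.independent_insert)
  moreover have "pt u \<subseteq> L" "pt w \<subseteq> L" unfolding pt_def using B uw L
    using vec.span_minimal[of "{u}" L] vec.span_minimal[of "{w}" L] by auto
  ultimately show ?thesis by (intro that[of "pt u" "pt w"] pt_mem_points pt_neq)
qed

lemma pt_normalise:
  "pt (v3 2 b c) = pt (v3 1 (2 * b) (2 * c))"
  "pt (v3 0 2 c) = pt (v3 0 1 (2 * c))"
  "pt (v3 0 0 2) = pt (v3 0 0 1)"
proof -
  have "v3 2 b c = 2 *s v3 1 (2 * b) (2 * c)" "v3 0 2 c = 2 *s v3 0 1 (2 * c)"
    "v3 0 0 2 = 2 *s v3 0 0 1"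
    by (simp_all add: mult.assoc[symmetric] F3_numerals)
  thus "pt (v3 2 b c) = pt (v3 1 (2 * b) (2 * c))" "pt (v3 0 2 c) = pt (v3 0 1 (2 * c))"
    "pt (v3 0 0 2) = pt (v3 0 0 1)"
    by (metis pt_scale F3_two_neq(1))+
qed

lemma points_enumeration:
  assumes "X \<in> LG3_points"
  shows "X \<in> {pt (v3 1 0 0), pt (v3 0 1 0), pt (v3 0 0 1), pt (v3 1 1 1),
               pt (v3 1 1 0), pt (v3 1 0 1), pt (v3 0 1 1),
               pt (v3 1 2 0), pt (v3 1 0 2), pt (v3 0 1 2),
               pt (v3 1 1 2), pt (v3 1 2 1), pt (v3 1 2 2)}"
proof -
  obtain x where x: "x \<noteq> 0" "X = pt x" using point_eq_pt[OF assms] .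
  define a b c where "a = x$1" "b = x$2" "c = x$3"
  have x_eq: "x = v3 a b c" unfolding a_b_c_def by (rule v3_components)
  have "a = 0 \<or> a = 1 \<or> a = 2" "b = 0 \<or> b = 1 \<or> b = 2" "c = 0 \<or> c = 1 \<or> c = 2"
    using UNIV_F3 by blast+
  moreover have "v3 a b c \<noteq> v3 0 0 0" using x x_eq zero_eq_v3 by simp
  ultimately show ?thesis unfolding x(2) x_eq
    by (elim disjE) (simp_all only: pt_normalise F3_three_eq_0 F3_numerals mult_1_right
        mult_zero_right insert_iff simp_thms)
qed

section \<open>The colouring\<close>

text \<open>The last branch is never taken: no line contains all three coordinate points.\<close>
definition frame_coloring :: "V3 set \<Rightarrow> nat" where
  "frame_coloring X =
    (if X \<in> LG3_points then
       (if X = pt (v3 1 0 0) then 0 else if X = pt (v3 0 1 0) then 1 else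
        if X = pt (v3 0 0 1) then 2 else if X = pt (v3 1 1 1) then 3 else 4)
     else
       (if \<not> pt (v3 1 0 0) \<subseteq> X then 0 else if \<not> pt (v3 0 1 0) \<subseteq> X then 1
        else if \<not> pt (v3 0 0 1) \<subseteq> X then 2 else 3))"

lemma frame_coloring_less_5: "frame_coloring X < 5"
  unfolding frame_coloring_def by auto

lemma coordinate_points_not_collinear:
  assumes "L \<in> LG3_lines"
  shows "\<not> (pt (v3 1 0 0) \<subseteq> L \<and> pt (v3 0 1 0) \<subseteq> L \<and> pt (v3 0 0 1) \<subseteq> L)"
proof
  let ?S = "{v3 1 0 0, v3 0 1 0, v3 0 0 1}"
  assume "pt (v3 1 0 0) \<subseteq> L \<and> pt (v3 0 1 0) \<subseteq> L \<and> pt (v3 0 0 1) \<subseteq> L"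
  hence "?S \<subseteq> L" using pt_self by blast
  hence "vec.dim ?S \<le> vec.dim L" by (rule vec.dim_subset)
  moreover have "vec.independent ?S"
    by (simp add: vec.independent_insert coordinate_simps[unfolded lin_def pt_def])
  hence "vec.dim ?S = 3" by (simp add: vec.dim_eq_card_independent)
  ultimately show False using assms unfolding LG3_lines_def by simp
qed

lemma frame_coloring_proper: "proper_coloring LG3_vertices LG3_adj frame_coloring"
  unfolding proper_coloring_def LG3_adj_def
  using coordinate_points_not_collinear points_lines_disjoint by (auto simp: frame_coloring_def)

lemma frame_coloring_points:
  "frame_coloring (pt (v3 1 0 0)) = 0" "frame_coloring (pt (v3 0 1 0)) = 1"
  "frame_coloring (pt (v3 0 0 1)) = 2" "frame_coloring (pt (v3 1 1 1)) = 3"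
  "frame_coloring (pt (v3 1 1 0)) = 4"
proof -
  have "pt (v3 0 1 0) \<noteq> pt (v3 1 0 0)" "pt (v3 0 0 1) \<noteq> pt (v3 1 0 0)"
    "pt (v3 0 0 1) \<noteq> pt (v3 0 1 0)" "pt (v3 1 1 1) \<noteq> pt (v3 1 0 0)"
    "pt (v3 1 1 1) \<noteq> pt (v3 0 1 0)" "pt (v3 1 1 1) \<noteq> pt (v3 0 0 1)"
    "pt (v3 1 1 0) \<noteq> pt (v3 1 0 0)" "pt (v3 1 1 0) \<noteq> pt (v3 0 1 0)"
    "pt (v3 1 1 0) \<noteq> pt (v3 0 0 1)" "pt (v3 1 1 0) \<noteq> pt (v3 1 1 1)"
    by (rule pt_neq, simp add: coordinate_simps)+
  moreover have "pt (v3 a b c) \<in> LG3_points" if "\<not> (a = 0 \<and> b = 0 \<and> c = 0)" for a b c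
    using pt_mem_points that by (simp add: zero_eq_v3)
  ultimately show
    "frame_coloring (pt (v3 1 0 0)) = 0" "frame_coloring (pt (v3 0 1 0)) = 1"
    "frame_coloring (pt (v3 0 0 1)) = 2" "frame_coloring (pt (v3 1 1 1)) = 3"
    "frame_coloring (pt (v3 1 1 0)) = 4"
    unfolding frame_coloring_def by simp_all
qed

lemma frame_coloring_eq_frame_point:
  "Y \<in> LG3_points \<Longrightarrow> frame_coloring Y = 0 \<Longrightarrow> Y = pt (v3 1 0 0)"
  "Y \<in> LG3_points \<Longrightarrow> frame_coloring Y = 1 \<Longrightarrow> Y = pt (v3 0 1 0)"
  "Y \<in> LG3_points \<Longrightarrow> frame_coloring Y = 2 \<Longrightarrow> Y = pt (v3 0 0 1)"
  "Y \<in> LG3_points \<Longrightarrow> frame_coloring Y = 3 \<Longrightarrow> Y = pt (v3 1 1 1)"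
  unfolding frame_coloring_def by (auto split: if_splits)

lemma frame_coloring_eq_4_imp_point:
  "Y \<in> LG3_vertices \<Longrightarrow> frame_coloring Y = 4 \<Longrightarrow> Y \<in> LG3_points"
  unfolding frame_coloring_def LG3_vertices_def by (auto split: if_splits)

section \<open>Automorphisms of LG_3\<close>

lemma LG3_adj_point: "P \<in> LG3_points \<Longrightarrow> LG3_adj P Y \<longleftrightarrow> Y \<in> LG3_lines \<and> P \<subseteq> Y"
  unfolding LG3_adj_def using points_lines_disjoint by blast

lemma LG3_adj_line: "L \<in> LG3_lines \<Longrightarrow> LG3_adj Y L \<longleftrightarrow> Y \<in> LG3_points \<and> Y \<subseteq> L"
  unfolding LG3_adj_def using points_lines_disjoint by blast

context
  fixes \<sigma> :: "V3 set \<Rightarrow> V3 set"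
  assumes aut: "graph_automorphism LG3_vertices LG3_adj \<sigma>"
begin

lemma automorphism_incident:
  assumes "P \<in> LG3_points" "L \<in> LG3_lines" "P \<subseteq> L"
  shows "LG3_adj (\<sigma> P) (\<sigma> L)"
proof -
  have "LG3_adj P L" using assms LG3_adj_point by blast
  moreover have "P \<in> LG3_vertices" "L \<in> LG3_vertices"
    using assms unfolding LG3_vertices_def by blast+
  ultimately show ?thesis using aut unfolding graph_automorphism_def by blast
qed

lemma automorphism_fixes_join:
  assumes P: "P \<in> LG3_points" and Q: "Q \<in> LG3_points" and "P \<noteq> Q" "\<sigma> P = P" "\<sigma> Q = Q"
    and L: "L \<in> LG3_lines" and "P \<subseteq> L" "Q \<subseteq> L"
  shows "\<sigma> L = L"
proof -
  have "LG3_adj P (\<sigma> L)" "LG3_adj Q (\<sigma> L)"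
    using automorphism_incident[OF P L] automorphism_incident[OF Q L] assms by auto
  hence "\<sigma> L \<in> LG3_lines" "P \<subseteq> \<sigma> L" "Q \<subseteq> \<sigma> L" using LG3_adj_point P Q by auto
  thus ?thesis using vec.projective_join_unique[of P Q] assms
    unfolding LG3_points_def LG3_lines_def by blast
qed

lemma automorphism_fixes_meet:
  assumes P: "P \<in> LG3_points" and L: "L \<in> LG3_lines" and M: "M \<in> LG3_lines"
    and "L \<noteq> M" "\<sigma> L = L" "\<sigma> M = M" "P \<subseteq> L" "P \<subseteq> M"
  shows "\<sigma> P = P"
proof -
  have "LG3_adj (\<sigma> P) L" "LG3_adj (\<sigma> P) M"
    using automorphism_incident[OF P L] automorphism_incident[OF P M] assms by auto
  hence "\<sigma> P \<in> LG3_points" "\<sigma> P \<subseteq> L" "\<sigma> P \<subseteq> M" using LG3_adj_line L M by auto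
  thus ?thesis using vec.projective_meet_unique[of "\<sigma> P" P L M] assms
    unfolding LG3_points_def LG3_lines_def by blast
qed

lemma automorphism_point_if_collinear_point:
  assumes "P \<in> LG3_points" "L \<in> LG3_lines" "P \<subseteq> L"
    and "E \<in> LG3_points" "E \<subseteq> L" "\<sigma> E \<in> LG3_points"
  shows "\<sigma> P \<in> LG3_points"
proof -
  have "\<sigma> L \<in> LG3_lines"
    using automorphism_incident[of E L] assms LG3_adj_point[of "\<sigma> E"] by blast
  thus ?thesis using automorphism_incident[of P L] assms LG3_adj_line by blast
qed

lemma automorphism_fixes_lin:
  assumes "\<sigma> (pt u) = pt u" "\<sigma> (pt w) = pt w" "u \<noteq> 0" "w \<noteq> 0" "u \<notin> pt w"
  shows "\<sigma> (lin u w) = lin u w"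
  using automorphism_fixes_join[OF pt_mem_points pt_mem_points pt_neq _ _ lin_mem_lines
      pt_subset_lin pt_subset_lin] assms lin_gen
  by blast

lemma automorphism_fixes_pt:
  assumes "\<sigma> (lin a b) = lin a b" "\<sigma> (lin c d) = lin c d"
    "b \<noteq> 0" "a \<notin> pt b" "d \<noteq> 0" "c \<notin> pt d"
    "r \<noteq> 0" "r \<in> lin a b" "r \<in> lin c d" "c \<notin> lin a b"
  shows "\<sigma> (pt r) = pt r"
proof -
  have "lin a b \<noteq> lin c d" using assms(10) lin_gen by auto
  thus ?thesis using automorphism_fixes_meet[OF pt_mem_points lin_mem_lines lin_mem_lines
        _ _ _ pt_subset_lin pt_subset_lin] assms
    by blast
qed

lemma automorphism_fixing_frame_fixes_points:
  assumes A: "\<sigma> (pt (v3 1 0 0)) = pt (v3 1 0 0)" and B: "\<sigma> (pt (v3 0 1 0)) = pt (v3 0 1 0)"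
    and C: "\<sigma> (pt (v3 0 0 1)) = pt (v3 0 0 1)" and D: "\<sigma> (pt (v3 1 1 1)) = pt (v3 1 1 1)"
    and "P \<in> LG3_points"
  shows "\<sigma> P = P"
proof -
  note join = automorphism_fixes_lin and meet = automorphism_fixes_pt
  note simps = coordinate_simps
  have AB: "\<sigma> (lin (v3 1 0 0) (v3 0 1 0)) = lin (v3 1 0 0) (v3 0 1 0)" by (rule join) (simp_all add: A B simps)
  have CD: "\<sigma> (lin (v3 0 0 1) (v3 1 1 1)) = lin (v3 0 0 1) (v3 1 1 1)" by (rule join) (simp_all add: C D simps)
  have AC: "\<sigma> (lin (v3 1 0 0) (v3 0 0 1)) = lin (v3 1 0 0) (v3 0 0 1)" by (rule join) (simp_all add: A C simps)
  have BD: "\<sigma> (lin (v3 0 1 0) (v3 1 1 1)) = lin (v3 0 1 0) (v3 1 1 1)" by (rule join) (simp_all add: B D simps)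
  have AD: "\<sigma> (lin (v3 1 0 0) (v3 1 1 1)) = lin (v3 1 0 0) (v3 1 1 1)" by (rule join) (simp_all add: A D simps)
  have BC: "\<sigma> (lin (v3 0 1 0) (v3 0 0 1)) = lin (v3 0 1 0) (v3 0 0 1)" by (rule join) (simp_all add: B C simps)
  have d1: "\<sigma> (pt (v3 1 1 0)) = pt (v3 1 1 0)" by (rule meet[OF AB CD]) (simp_all add: simps)
  have d2: "\<sigma> (pt (v3 1 0 1)) = pt (v3 1 0 1)" by (rule meet[OF AC BD]) (simp_all add: simps)
  have d3: "\<sigma> (pt (v3 0 1 1)) = pt (v3 0 1 1)" by (rule meet[OF AD BC]) (simp_all add: simps)
  have l1: "\<sigma> (lin (v3 1 0 1) (v3 0 1 1)) = lin (v3 1 0 1) (v3 0 1 1)" by (rule join) (simp_all add: d2 d3 simps)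
  have l2: "\<sigma> (lin (v3 1 1 0) (v3 0 1 1)) = lin (v3 1 1 0) (v3 0 1 1)" by (rule join) (simp_all add: d1 d3 simps)
  have l3: "\<sigma> (lin (v3 1 1 0) (v3 1 0 1)) = lin (v3 1 1 0) (v3 1 0 1)" by (rule join) (simp_all add: d1 d2 simps)
  have q1: "\<sigma> (pt (v3 1 2 0)) = pt (v3 1 2 0)" by (rule meet[OF AB l1]) (simp_all add: simps)
  have q2: "\<sigma> (pt (v3 1 0 2)) = pt (v3 1 0 2)" by (rule meet[OF AC l2]) (simp_all add: simps)
  have q3: "\<sigma> (pt (v3 0 1 2)) = pt (v3 0 1 2)" by (rule meet[OF BC l3]) (simp_all add: simps)
  have l4: "\<sigma> (lin (v3 0 1 0) (v3 1 0 2)) = lin (v3 0 1 0) (v3 1 0 2)" by (rule join) (simp_all add: B q2 simps)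
  have l5: "\<sigma> (lin (v3 1 0 0) (v3 0 1 2)) = lin (v3 1 0 0) (v3 0 1 2)" by (rule join) (simp_all add: A q3 simps)
  have l6: "\<sigma> (lin (v3 0 0 1) (v3 1 2 0)) = lin (v3 0 0 1) (v3 1 2 0)" by (rule join) (simp_all add: C q1 simps)
  have q4: "\<sigma> (pt (v3 1 1 2)) = pt (v3 1 1 2)" by (rule meet[OF CD l4]) (simp_all add: simps)
  have q5: "\<sigma> (pt (v3 1 2 1)) = pt (v3 1 2 1)" by (rule meet[OF BD l5]) (simp_all add: simps)
  have q6: "\<sigma> (pt (v3 1 2 2)) = pt (v3 1 2 2)" by (rule meet[OF AD l6]) (simp_all add: simps)
  show ?thesis
    using points_enumeration[OF \<open>P \<in> LG3_points\<close>] A B C D d1 d2 d3 q1 q2 q3 q4 q5 q6 by auto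
qed

lemma automorphism_fixing_points_is_identity:
  assumes "\<And>P. P \<in> LG3_points \<Longrightarrow> \<sigma> P = P" and "X \<in> LG3_vertices"
  shows "\<sigma> X = X"
proof (cases "X \<in> LG3_points")
  case False
  hence "X \<in> LG3_lines" using assms(2) unfolding LG3_vertices_def by blast
  then obtain P Q where "P \<in> LG3_points" "Q \<in> LG3_points" "P \<noteq> Q" "P \<subseteq> X" "Q \<subseteq> X"
    by (rule line_contains_two_points)
  thus ?thesis using automorphism_fixes_join \<open>X \<in> LG3_lines\<close> assms(1) by blast
qed (use assms in blast)

lemma color_preserving_automorphism_fixes_frame:
  assumes colors: "\<And>X. X \<in> LG3_vertices \<Longrightarrow> frame_coloring (\<sigma> X) = frame_coloring X"
    and v: "v \<in> {v3 1 0 0, v3 0 1 0, v3 0 0 1, v3 1 1 1}"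
  shows "\<sigma> (pt v) = pt v"
proof -
  have v0: "v \<noteq> 0" using v by (auto simp: zero_eq_v3)
  have vertex: "pt x \<in> LG3_vertices" if "x \<noteq> 0" for x
    using pt_mem_points[OF that] unfolding LG3_vertices_def by blast
  have "\<sigma> (pt (v3 1 1 0)) \<in> LG3_vertices"
    using aut vertex[of "v3 1 1 0"] unfolding graph_automorphism_def bij_betw_def
    by (auto simp: zero_eq_v3)
  hence e: "\<sigma> (pt (v3 1 1 0)) \<in> LG3_points"
    using frame_coloring_eq_4_imp_point colors[OF vertex, of "v3 1 1 0"] frame_coloring_points(5)
    by (simp add: zero_eq_v3)
  obtain a b where ab: "b \<noteq> 0" "a \<notin> pt b" "v \<in> lin a b" "v3 1 1 0 \<in> lin a b"
  proof -
    from v consider "v = v3 1 0 0 \<or> v = v3 0 1 0" | "v = v3 0 0 1 \<or> v = v3 1 1 1" by blast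
    thus ?thesis
    proof cases
      case 1
      thus ?thesis by (intro that[of "v3 0 1 0" "v3 1 0 0"]) (auto simp: coordinate_simps)
    next
      case 2
      thus ?thesis by (intro that[of "v3 1 1 1" "v3 0 0 1"]) (auto simp: coordinate_simps)
    qed
  qed
  have "\<sigma> (pt v) \<in> LG3_points"
    by (rule automorphism_point_if_collinear_point[OF pt_mem_points lin_mem_lines pt_subset_lin
          pt_mem_points pt_subset_lin e]) (use ab v0 in \<open>simp_all add: zero_eq_v3\<close>)
  moreover have "frame_coloring (\<sigma> (pt v)) = frame_coloring (pt v)" using colors vertex v0 by blast
  ultimately show ?thesis
    using v frame_coloring_points frame_coloring_eq_frame_point by (elim insertE emptyE) metis+
qed

end

lemma frame_coloring_distinguishing:
  "distinguishing_coloring LG3_vertices LG3_adj frame_coloring"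
  unfolding distinguishing_coloring_def
proof (intro allI impI ballI)
  fix \<sigma> X
  assume "graph_automorphism LG3_vertices LG3_adj \<sigma> \<and>
    (\<forall>v\<in>LG3_vertices. frame_coloring (\<sigma> v) = frame_coloring v)" and X: "X \<in> LG3_vertices"
  then have aut: "graph_automorphism LG3_vertices LG3_adj \<sigma>"
    and colors: "\<And>v. v \<in> LG3_vertices \<Longrightarrow> frame_coloring (\<sigma> v) = frame_coloring v" by auto
  have "\<sigma> (pt v) = pt v" if "v \<in> {v3 1 0 0, v3 0 1 0, v3 0 0 1, v3 1 1 1}" for v
    using color_preserving_automorphism_fixes_frame[OF aut colors that] .
  hence "\<sigma> P = P" if "P \<in> LG3_points" for P
    using automorphism_fixing_frame_fixes_points[OF aut _ _ _ _ that] by simp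
  thus "\<sigma> X = X" using automorphism_fixing_points_is_identity[OF aut _ X] by blast
qed

theorem mainTheorem16:
  shows "distinguishing_chromatic_number LG3_vertices LG3_adj \<le> 5"
proof -
  have "\<exists>c. c ` LG3_vertices \<subseteq> {..<5} \<and> proper_coloring LG3_vertices LG3_adj c
            \<and> distinguishing_coloring LG3_vertices LG3_adj c"
    using frame_coloring_less_5 frame_coloring_proper frame_coloring_distinguishing by blast
  thus ?thesis unfolding distinguishing_chromatic_number_def by (rule Least_le)
qed

end
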